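(* Let $d\ge1$ and consider either $\gamma\in(1,3]$ when $d=1$, or $\gamma\in\left(1,\frac{d+4}{d+2}\right]\cup\left\{\frac{d+2}{d}\right\}$ when $d\ge2$. Let $\Omega=\mathbb{R}^d$ or $\mathbb{T}^d$, and let $f,g\ge0$ be functions on $\Omega\times\mathbb{R}^d$ whose macroscopic quantities $\rho_h,u_h$ ($h\in\{f,g\}$) satisfy: (i) in the case $\gamma=\frac{d+2}{d}$: there exist $C_1,C_2>0$ with $\rho_h\le C_1$ and $|u_h|\le C_2$ on $\Omega$ for $h\in\{f,g\}$; (ii) in the case $\gamma\in(1,3]$ with $d=1$ or $\gamma\in(1,\frac{d+4}{d+2}]$ with $d\ge2$ (with $\gamma\ne\frac{d+2}{d}$): there exist $C_0,C_1,C_2>0$ with $C_0\le\rho_h\le C_1$ and $|u_h|\le C_2$ on $\Omega$ for $h\in\{f,g\}$. Then $$\iint_{\Omega\times\mathbb{R}^d}(1+|v|^2)\,|M[f]-M[g]|\,dxdv\le C\int_\Omega\big(|\rho_f-\rho_g|+|u_f-u_g|\big)\,dx$$ for some $C>0$ depending only on $d$, $\gamma$, and the constants $C_i$.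
   Context: For $h\ge0$ on $\Omega\times\mathbb{R}^d$: $\rho_h(x)=\int_{\mathbb{R}^d}h\,dv$ and $\rho_h u_h=\int_{\mathbb{R}^d}vh\,dv$. Let $|\mathbb{S}_{d-1}|=\frac{2\pi^{d/2}}{\Gamma(d/2)}$, $c_d=\frac{d}{|\mathbb{S}_{d-1}|}$, $n=\frac{2}{\gamma-1}-d$, $c=\left(\frac{2\gamma}{\gamma-1}\right)^{-\frac1{\gamma-1}}\frac{\Gamma(\frac{\gamma}{\gamma-1})}{\pi^{d/2}\Gamma(\frac n2+1)}$. The equilibrium function is $M[h]=\mathbf{1}_{|u_h-v|^d\le c_d\rho_h}$ if $\gamma=\frac{d+2}{d}$, and $M[h]=c\left(\frac{2\gamma}{\gamma-1}\rho_h^{\gamma-1}-|v-u_h|^2\right)_+^{n/2}$ if $\gamma\in(1,\frac{d+2}{d})$. *)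

theory Defs
  imports "HOL-Analysis.Analysis"
begin

text \<open>Kinetic densities are functions h x v with x in the physical domain and
  v in the velocity space, both modelled on real^'n with d = CARD('n).\<close>


definition rho :: "(real^'n \<Rightarrow> real^'n \<Rightarrow> real) \<Rightarrow> real^'n \<Rightarrow> real" where
  "rho h x = (\<integral>v. h x v \<partial>lborel)"

definition mom :: "(real^'n \<Rightarrow> real^'n \<Rightarrow> real) \<Rightarrow> real^'n \<Rightarrow> real^'n" where
  "mom h x = (\<integral>v. h x v *\<^sub>R v \<partial>lborel)"

definition vel :: "(real^'n \<Rightarrow> real^'n \<Rightarrow> real) \<Rightarrow> real^'n \<Rightarrow> real^'n" where
  "vel h x = (if rho h x = 0 then 0 else (1 / rho h x) *\<^sub>R mom h x)"

definition sphere_area :: "nat \<Rightarrow> real" where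
  "sphere_area d = 2 * pi powr (real d / 2) / Gamma (real d / 2)"

definition c_d :: "nat \<Rightarrow> real" where
  "c_d d = real d / sphere_area d"

definition n_exp :: "nat \<Rightarrow> real \<Rightarrow> real" where
  "n_exp d \<gamma> = 2 / (\<gamma> - 1) - real d"

definition c_const :: "nat \<Rightarrow> real \<Rightarrow> real" where
  "c_const d \<gamma> = (2 * \<gamma> / (\<gamma> - 1)) powr (- 1 / (\<gamma> - 1)) * Gamma (\<gamma> / (\<gamma> - 1))
      / (pi powr (real d / 2) * Gamma (n_exp d \<gamma> / 2 + 1))"

definition Mloc :: "real \<Rightarrow> real \<Rightarrow> real^'n \<Rightarrow> real^'n \<Rightarrow> real" where
  "Mloc \<gamma> r w v =
     (let d = CARD('n) in
      if \<gamma> = (real d + 2) / real d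
      then (if norm (w - v) ^ d \<le> c_d d * r then 1 else 0)
      else c_const d \<gamma> * (max 0 (2 * \<gamma> / (\<gamma> - 1) * r powr (\<gamma> - 1) - (norm (v - w))\<^sup>2))
             powr (n_exp d \<gamma> / 2))"

definition Meq :: "real \<Rightarrow> (real^'n \<Rightarrow> real^'n \<Rightarrow> real) \<Rightarrow> real^'n \<Rightarrow> real^'n \<Rightarrow> real" where
  "Meq \<gamma> h x v = Mloc \<gamma> (rho h x) (vel h x) v"

text \<open>Physical domain: R^d (torus = False) with Lebesgue measure, or the torus T^d
  (torus = True), represented by 1-periodic functions integrated over the unit cube.\<close>
definition dom_measure :: "bool \<Rightarrow> (real^'n) measure" where
  "dom_measure torus = (if torus then restrict_space lborel (cbox 0 One) else lborel)"

definition periodic_in_x :: "(real^'n \<Rightarrow> real^'n \<Rightarrow> real) \<Rightarrow> bool" where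
  "periodic_in_x h \<longleftrightarrow> (\<forall>x v i. h (x + axis i 1) v = h x v)"

definition admissible_gamma :: "nat \<Rightarrow> real \<Rightarrow> bool" where
  "admissible_gamma d \<gamma> \<longleftrightarrow>
     (d = 1 \<and> 1 < \<gamma> \<and> \<gamma> \<le> 3) \<or>
     (d \<ge> 2 \<and> ((1 < \<gamma> \<and> \<gamma> \<le> (real d + 4) / (real d + 2)) \<or> \<gamma> = (real d + 2) / real d))"

end

theory Submission
  imports Defs
begin

(* Both equilibria are dilated and translated copies of a single profile,
  M[h](x, v) = c * P (a (rho_h x)) (v - u_h x), where P a is supported in the ball of radius a,
  increases with a, and has mass proportional to a^q, with a(rho)^q linear in rho:
  P a is the indicator of the ball (q = d) when gamma = (d+2)/d, and (a^2 - |v|^2)_+^(n/2)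
  (q = n + d = 2/(gamma-1)) otherwise.  Moving the centre by delta = |u_f - u_g| costs at most
  delta in the radius, so M[f] and M[g] both lie between the profiles centred at u_f with radii
  min a - delta and max a + delta.  Their difference is supported in a fixed ball, where the
  weight 1 + |v|^2 is bounded, and its mass is the gap between the q-th powers of the two radii:
  a multiple of |rho_f - rho_g| plus O(delta), since t^q is Lipschitz on bounded sets for q >= 1.
  Integrating in x gives the claim. *)

lemma nn_integral_lborel_translate:
  fixes f :: "'a::euclidean_space \<Rightarrow> ennreal"
  assumes [measurable]: "f \<in> borel_measurable borel"
  shows "(\<integral>\<^sup>+ x. f (x - w) \<partial>lborel) = (\<integral>\<^sup>+ x. f x \<partial>lborel)"
proof -
  have "(\<integral>\<^sup>+ x. f x \<partial>lborel) = (\<integral>\<^sup>+ x. f x \<partial>distr lborel borel ((+) (- w)))"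
    by (simp add: lborel_distr_plus)
  also have "\<dots> = (\<integral>\<^sup>+ x. f (x - w) \<partial>lborel)"
    by (simp add: nn_integral_distr)
  finally show ?thesis ..
qed

lemma nn_integral_lborel_dilate:
  fixes f :: "'a::euclidean_space \<Rightarrow> ennreal"
  assumes [measurable]: "f \<in> borel_measurable borel" and "c \<noteq> 0"
  shows "(\<integral>\<^sup>+ x. f x \<partial>lborel) = ennreal (\<bar>c\<bar> ^ DIM('a)) * (\<integral>\<^sup>+ x. f (c *\<^sub>R x) \<partial>lborel)"
  by (subst lborel_affine[OF \<open>c \<noteq> 0\<close>, of 0])
     (simp add: nn_integral_density nn_integral_distr nn_integral_cmult)

lemma powr_diff_le:
  fixes s t B q :: real
  assumes "0 \<le> s" "s \<le> t" "t \<le> B" "1 \<le> q"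
  shows "t powr q - s powr q \<le> q * B powr (q - 1) * (t - s)"
proof (cases "s = 0")
  case True
  have "t powr q = t * t powr (q - 1)"
    using assms by (cases "t = 0") (simp_all add: powr_mult_base)
  also have "\<dots> \<le> t * B powr (q - 1)"
    using assms by (intro mult_left_mono powr_mono2) auto
  also have "\<dots> \<le> q * B powr (q - 1) * t"
    using assms mult_right_mono[of 1 q "t * B powr (q - 1)"] by (simp add: ac_simps)
  finally show ?thesis using True assms by simp
next
  case False
  show ?thesis
  proof (cases "s = t")
    case False
    with \<open>s \<noteq> 0\<close> assms have "0 < s" "s < t" by auto
    have "\<exists>z. s < z \<and> z < t \<and> t powr q - s powr q = (t - s) * (q * z powr (q - 1))"
      using \<open>0 < s\<close> by (intro MVT2[OF \<open>s < t\<close>]) (auto intro!: derivative_eq_intros)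
    then obtain z where z: "s < z" "z < t" "t powr q - s powr q = (t - s) * (q * z powr (q - 1))"
      by blast
    have "z powr (q - 1) \<le> B powr (q - 1)"
      using z \<open>0 < s\<close> assms by (intro powr_mono2) auto
    then have "(t - s) * (q * z powr (q - 1)) \<le> (t - s) * (q * B powr (q - 1))"
      using z assms by (intro mult_left_mono) auto
    with z show ?thesis
      by (simp add: algebra_simps)
  qed simp
qed

lemma powr_envelope_gap_le:
  fixes a1 a2 \<delta> B q :: real
  assumes "1 \<le> q" "0 \<le> a1" "0 \<le> a2" "0 \<le> \<delta>" "max a1 a2 + \<delta> \<le> B"
  shows "(max a1 a2 + \<delta>) powr q - max 0 (min a1 a2 - \<delta>) powr q
    \<le> \<bar>a1 powr q - a2 powr q\<bar> + 2 * (q * B powr (q - 1)) * \<delta>"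
proof -
  define L where "L = q * B powr (q - 1)"
  have "0 \<le> L"
    using assms unfolding L_def by simp
  have outer: "(max a1 a2 + \<delta>) powr q - max a1 a2 powr q \<le> L * \<delta>"
    using powr_diff_le[of "max a1 a2" "max a1 a2 + \<delta>" B q] assms unfolding L_def by auto
  have middle: "max a1 a2 powr q - min a1 a2 powr q = \<bar>a1 powr q - a2 powr q\<bar>"
    using assms powr_mono2[of q a1 a2] powr_mono2[of q a2 a1] by (cases "a1 \<le> a2") auto
  have "min a1 a2 powr q - max 0 (min a1 a2 - \<delta>) powr q
      \<le> L * (min a1 a2 - max 0 (min a1 a2 - \<delta>))"
    using assms unfolding L_def by (intro powr_diff_le) auto
  also have "\<dots> \<le> L * \<delta>"
    using \<open>0 \<le> L\<close> assms by (intro mult_left_mono) auto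
  finally have inner: "min a1 a2 powr q - max 0 (min a1 a2 - \<delta>) powr q \<le> L * \<delta>" .
  from outer middle inner show ?thesis
    unfolding L_def by linarith
qed

lemma nn_integral_weighted_diff_le_envelope:
  fixes F1 F2 Lo Up :: "'a::euclidean_space \<Rightarrow> real"
  assumes "\<And>v. Lo v \<le> F1 v" "\<And>v. F1 v \<le> Up v" "\<And>v. Lo v \<le> F2 v" "\<And>v. F2 v \<le> Up v"
    and "\<And>v. 0 \<le> Lo v" and support: "\<And>v. Up v \<noteq> 0 \<Longrightarrow> norm v \<le> \<rho>"
    and [measurable]: "Lo \<in> borel_measurable borel" "Up \<in> borel_measurable borel"
    and int_Up: "(\<integral>\<^sup>+ v. Up v \<partial>lborel) = ennreal IU"
    and int_Lo: "(\<integral>\<^sup>+ v. Lo v \<partial>lborel) = ennreal IL" and "0 \<le> IL"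
  shows "(\<integral>\<^sup>+ v. ennreal ((1 + (norm v)\<^sup>2) * \<bar>F1 v - F2 v\<bar>) \<partial>lborel)
    \<le> ennreal ((1 + \<rho>\<^sup>2) * (IU - IL))"
proof -
  have pointwise: "(1 + (norm v)\<^sup>2) * \<bar>F1 v - F2 v\<bar> \<le> (1 + \<rho>\<^sup>2) * (Up v - Lo v)" for v
  proof (cases "Up v = 0")
    case True
    with assms(1-5)[of v] have "F1 v = 0" "F2 v = 0" "Lo v = 0"
      by linarith+
    with True show ?thesis by simp
  next
    case False
    then have "(norm v)\<^sup>2 \<le> \<rho>\<^sup>2"
      using support by (intro power_mono) auto
    moreover have "\<bar>F1 v - F2 v\<bar> \<le> Up v - Lo v"
      using assms(1-4)[of v] by linarith
    ultimately show ?thesis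
      by (intro mult_mono) auto
  qed
  define R where "R = 1 + \<rho>\<^sup>2"
  have "0 \<le> R"
    unfolding R_def by simp
  have "(\<integral>\<^sup>+ v. ennreal ((1 + (norm v)\<^sup>2) * \<bar>F1 v - F2 v\<bar>) \<partial>lborel)
      \<le> (\<integral>\<^sup>+ v. ennreal R * (ennreal (Up v) - ennreal (Lo v)) \<partial>lborel)"
  proof (rule nn_integral_mono)
    fix v
    have "ennreal ((1 + (norm v)\<^sup>2) * \<bar>F1 v - F2 v\<bar>) \<le> ennreal (R * (Up v - Lo v))"
      using pointwise unfolding R_def by (rule ennreal_leI)
    also have "\<dots> = ennreal R * (ennreal (Up v) - ennreal (Lo v))"
      using assms(5)[of v] \<open>0 \<le> R\<close> by (simp add: ennreal_minus ennreal_mult'[symmetric])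
    finally show "ennreal ((1 + (norm v)\<^sup>2) * \<bar>F1 v - F2 v\<bar>) \<le> \<dots>" .
  qed
  also have "\<dots> = ennreal R * ((\<integral>\<^sup>+ v. Up v \<partial>lborel) - (\<integral>\<^sup>+ v. Lo v \<partial>lborel))"
  proof -
    have "Lo v \<le> Up v" for v
      using assms(1,2) order_trans by blast
    then have "AE v in lborel. ennreal (Lo v) \<le> ennreal (Up v)"
      by (simp add: ennreal_leI)
    then show ?thesis
      by (simp add: nn_integral_cmult nn_integral_diff int_Lo)
  qed
  also have "\<dots> = ennreal ((1 + \<rho>\<^sup>2) * (IU - IL))"
    using \<open>0 \<le> IL\<close> \<open>0 \<le> R\<close> unfolding R_def[symmetric]
    by (simp add: int_Up int_Lo ennreal_minus ennreal_mult'[symmetric])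
  finally show ?thesis .
qed

definition weighted_L1_Lipschitz_on ::
    "(real \<Rightarrow> 'a::euclidean_space \<Rightarrow> 'a \<Rightarrow> real) \<Rightarrow> real \<Rightarrow> real \<Rightarrow> real \<Rightarrow> bool" where
  "weighted_L1_Lipschitz_on M C1 C2 K \<longleftrightarrow>
    (\<forall>r1 r2 w1 w2. 0 \<le> r1 \<longrightarrow> r1 \<le> C1 \<longrightarrow> 0 \<le> r2 \<longrightarrow> r2 \<le> C1 \<longrightarrow>
       norm w1 \<le> C2 \<longrightarrow> norm w2 \<le> C2 \<longrightarrow>
       (\<integral>\<^sup>+ v. ennreal ((1 + (norm v)\<^sup>2) * \<bar>M r1 w1 v - M r2 w2 v\<bar>) \<partial>lborel)
         \<le> ennreal (K * (\<bar>r1 - r2\<bar> + norm (w1 - w2))))"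

lemma weighted_L1_Lipschitz_onD:
  assumes "weighted_L1_Lipschitz_on M C1 C2 K"
    and "0 \<le> r1" "r1 \<le> C1" "0 \<le> r2" "r2 \<le> C1" "norm w1 \<le> C2" "norm w2 \<le> C2"
  shows "(\<integral>\<^sup>+ v. ennreal ((1 + (norm v)\<^sup>2) * \<bar>M r1 w1 v - M r2 w2 v\<bar>) \<partial>lborel)
    \<le> ennreal (K * (\<bar>r1 - r2\<bar> + norm (w1 - w2)))"
  using assms unfolding weighted_L1_Lipschitz_on_def by blast

lemma weighted_L1_Lipschitz_on_mono:
  fixes M :: "real \<Rightarrow> 'a::euclidean_space \<Rightarrow> 'a \<Rightarrow> real"
  assumes "weighted_L1_Lipschitz_on M C1 C2 K" "K \<le> K'"
  shows "weighted_L1_Lipschitz_on M C1 C2 K'"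
  unfolding weighted_L1_Lipschitz_on_def
proof (intro allI impI)
  fix r1 r2 :: real and w1 w2 :: 'a
  assume "0 \<le> r1" "r1 \<le> C1" "0 \<le> r2" "r2 \<le> C1" "norm w1 \<le> C2" "norm w2 \<le> C2"
  with assms(1) have "(\<integral>\<^sup>+ v. ennreal ((1 + (norm v)\<^sup>2) * \<bar>M r1 w1 v - M r2 w2 v\<bar>) \<partial>lborel)
      \<le> ennreal (K * (\<bar>r1 - r2\<bar> + norm (w1 - w2)))"
    by (rule weighted_L1_Lipschitz_onD)
  also have "\<dots> \<le> ennreal (K' * (\<bar>r1 - r2\<bar> + norm (w1 - w2)))"
    using assms(2) by (intro ennreal_leI mult_right_mono) auto
  finally show "(\<integral>\<^sup>+ v. ennreal ((1 + (norm v)\<^sup>2) * \<bar>M r1 w1 v - M r2 w2 v\<bar>) \<partial>lborel)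
      \<le> ennreal (K' * (\<bar>r1 - r2\<bar> + norm (w1 - w2)))" .
qed

lemma weighted_L1_Lipschitz_on_cmult:
  fixes M :: "real \<Rightarrow> 'a::euclidean_space \<Rightarrow> 'a \<Rightarrow> real"
  assumes "weighted_L1_Lipschitz_on M C1 C2 K" and [measurable]: "\<And>r w. M r w \<in> borel_measurable borel"
  shows "weighted_L1_Lipschitz_on (\<lambda>r w v. c * M r w v) C1 C2 (\<bar>c\<bar> * K)"
  unfolding weighted_L1_Lipschitz_on_def
proof (intro allI impI)
  fix r1 r2 :: real and w1 w2 :: 'a
  assume "0 \<le> r1" "r1 \<le> C1" "0 \<le> r2" "r2 \<le> C1" "norm w1 \<le> C2" "norm w2 \<le> C2"
  with assms(1) have bound: "(\<integral>\<^sup>+ v. ennreal ((1 + (norm v)\<^sup>2) * \<bar>M r1 w1 v - M r2 w2 v\<bar>) \<partial>lborel)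
      \<le> ennreal (K * (\<bar>r1 - r2\<bar> + norm (w1 - w2)))"
    by (rule weighted_L1_Lipschitz_onD)
  have "(\<integral>\<^sup>+ v. ennreal ((1 + (norm v)\<^sup>2) * \<bar>c * M r1 w1 v - c * M r2 w2 v\<bar>) \<partial>lborel)
      = (\<integral>\<^sup>+ v. ennreal \<bar>c\<bar> * ennreal ((1 + (norm v)\<^sup>2) * \<bar>M r1 w1 v - M r2 w2 v\<bar>) \<partial>lborel)"
    by (intro nn_integral_cong)
       (simp add: ennreal_mult'[symmetric] right_diff_distrib[symmetric] abs_mult mult.left_commute)
  also have "\<dots> = ennreal \<bar>c\<bar> * (\<integral>\<^sup>+ v. ennreal ((1 + (norm v)\<^sup>2) * \<bar>M r1 w1 v - M r2 w2 v\<bar>) \<partial>lborel)"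
    by (rule nn_integral_cmult) measurable
  also have "\<dots> \<le> ennreal \<bar>c\<bar> * ennreal (K * (\<bar>r1 - r2\<bar> + norm (w1 - w2)))"
    using bound by (rule mult_left_mono) simp
  also have "\<dots> = ennreal (\<bar>c\<bar> * K * (\<bar>r1 - r2\<bar> + norm (w1 - w2)))"
    by (simp add: ennreal_mult'[symmetric] mult.assoc)
  finally show "(\<integral>\<^sup>+ v. ennreal ((1 + (norm v)\<^sup>2) * \<bar>c * M r1 w1 v - c * M r2 w2 v\<bar>) \<partial>lborel)
      \<le> ennreal (\<bar>c\<bar> * K * (\<bar>r1 - r2\<bar> + norm (w1 - w2)))" .
qed

lemma weighted_L1_Lipschitz_on_cong:
  fixes M M' :: "real \<Rightarrow> 'a::euclidean_space \<Rightarrow> 'a \<Rightarrow> real"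
  assumes "\<And>r w v. 0 \<le> r \<Longrightarrow> M r w v = M' r w v"
  shows "weighted_L1_Lipschitz_on M C1 C2 K \<longleftrightarrow> weighted_L1_Lipschitz_on M' C1 C2 K"
  unfolding weighted_L1_Lipschitz_on_def using assms by simp

locale dilation_profile =
  fixes P :: "real \<Rightarrow> 'a::euclidean_space \<Rightarrow> real" and q :: real
  assumes P_nonneg: "\<And>a u. 0 \<le> P a u"
    and borel_measurable_P [measurable]: "\<And>a. P a \<in> borel_measurable borel"
    and P_1_le_1: "\<And>u. P 1 u \<le> 1"
    and P_outside: "\<And>a u. 0 \<le> a \<Longrightarrow> a < norm u \<Longrightarrow> P a u = 0"
    and P_dilate: "\<And>a u. 0 < a \<Longrightarrow> P a (a *\<^sub>R u) = a powr (q - DIM('a)) * P 1 u"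
    and P_shift_le: "\<And>a \<delta> u e. 0 \<le> a \<Longrightarrow> norm e \<le> \<delta> \<Longrightarrow> P a (u + e) \<le> P (a + \<delta>) u"
    and P_le_shift: "\<And>a \<delta> u e. 0 < a - \<delta> \<Longrightarrow> norm e \<le> \<delta> \<Longrightarrow> P (a - \<delta>) u \<le> P a (u + e)"
    and exponent_ge_1: "1 \<le> q"
begin

lemma P_mono: "0 \<le> a \<Longrightarrow> a \<le> b \<Longrightarrow> P a u \<le> P b u"
  using P_shift_le[of a 0 "b - a" u] by simp

definition mass :: real where
  "mass = enn2real (\<integral>\<^sup>+ u. P 1 u \<partial>lborel)"

lemma mass_nonneg: "0 \<le> mass"
  unfolding mass_def by simp

lemma nn_integral_P_1: "(\<integral>\<^sup>+ u. P 1 u \<partial>lborel) = ennreal mass"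
proof -
  have "(\<integral>\<^sup>+ u. P 1 u \<partial>lborel) \<le> (\<integral>\<^sup>+ u. indicator (cball (0::'a) 1) u \<partial>lborel)"
    using P_1_le_1 P_outside[of 1] by (intro nn_integral_mono) (auto simp: indicator_def not_le)
  also have "\<dots> < \<infinity>"
    using emeasure_lborel_cball_finite by simp
  finally show ?thesis
    unfolding mass_def by (simp add: less_top)
qed

lemma nn_integral_P:
  assumes "0 \<le> a"
  shows "(\<integral>\<^sup>+ v. P a (v - w) \<partial>lborel) = ennreal (mass * a powr q)"
proof -
  have "(\<integral>\<^sup>+ v. P a (v - w) \<partial>lborel) = (\<integral>\<^sup>+ u. P a u \<partial>lborel)"
    by (rule nn_integral_lborel_translate) measurable
  also have "\<dots> = ennreal (mass * a powr q)"
  proof (cases "a = 0")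
    case True
    have "AE u in lborel. u \<noteq> (0::'a)"
      by (rule AE_I[of _ _ "{0}"]) auto
    then have "AE u in lborel. ennreal (P a u) = 0"
      by eventually_elim (use True P_outside in auto)
    then show ?thesis
      using True by (simp add: nn_integral_0_iff_AE)
  next
    case False
    with assms have "0 < a" by simp
    have "(\<integral>\<^sup>+ u. P a u \<partial>lborel) = ennreal (a ^ DIM('a)) * (\<integral>\<^sup>+ u. P a (a *\<^sub>R u) \<partial>lborel)"
      using \<open>0 < a\<close> by (subst nn_integral_lborel_dilate[of _ a]) auto
    also have "\<dots> = ennreal (a ^ DIM('a)) * (\<integral>\<^sup>+ u. ennreal (a powr (q - DIM('a))) * P 1 u \<partial>lborel)"
      using \<open>0 < a\<close> P_nonneg by (simp add: P_dilate ennreal_mult)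
    also have "\<dots> = ennreal (a ^ DIM('a) * a powr (q - DIM('a)) * mass)"
      using \<open>0 < a\<close> mass_nonneg
      by (simp add: nn_integral_cmult nn_integral_P_1 ennreal_mult mult.assoc)
    also have "a ^ DIM('a) * a powr (q - DIM('a)) = a powr q"
      using \<open>0 < a\<close> by (simp add: powr_realpow[symmetric] powr_add[symmetric])
    finally show ?thesis
      by (simp add: mult.commute)
  qed
  finally show ?thesis .
qed

lemma P_le_outer:
  assumes "0 \<le> a" "a \<le> c" "norm (w' - w) \<le> \<delta>"
  shows "P a (v - w) \<le> P (c + \<delta>) (v - w')"
proof -
  have "P a ((v - w') + (w' - w)) \<le> P (a + \<delta>) (v - w')"
    using assms by (intro P_shift_le) auto
  also have "\<dots> \<le> P (c + \<delta>) (v - w')"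
    using assms norm_ge_zero[of "w' - w"] by (intro P_mono) linarith+
  finally show ?thesis by simp
qed

lemma inner_le_P:
  assumes "0 < b - \<delta>" "b \<le> a" "norm (w' - w) \<le> \<delta>"
  shows "P (b - \<delta>) (v - w') \<le> P a (v - w)"
proof -
  have "P (b - \<delta>) (v - w') \<le> P (a - \<delta>) (v - w')"
    using assms by (intro P_mono) auto
  also have "\<dots> \<le> P a ((v - w') + (w' - w))"
    using assms by (intro P_le_shift) auto
  finally show ?thesis by simp
qed

lemma nn_integral_weighted_diff_P_le:
  assumes "0 \<le> a1" "a1 \<le> Am" "0 \<le> a2" "a2 \<le> Am" "norm w1 \<le> W" "norm w2 \<le> W"
  shows "(\<integral>\<^sup>+ v. ennreal ((1 + (norm v)\<^sup>2) * \<bar>P a1 (v - w1) - P a2 (v - w2)\<bar>) \<partial>lborel)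
    \<le> ennreal ((1 + (3 * W + Am)\<^sup>2) * mass *
         (\<bar>a1 powr q - a2 powr q\<bar> + 2 * (q * (Am + 2 * W) powr (q - 1)) * norm (w1 - w2)))"
proof -
  define \<delta> where "\<delta> = norm (w1 - w2)"
  define Up where "Up v = P (max a1 a2 + \<delta>) (v - w1)" for v
  define Lo where "Lo v = (if 0 < min a1 a2 - \<delta> then P (min a1 a2 - \<delta>) (v - w1) else 0)" for v
  have "0 \<le> \<delta>" "\<delta> \<le> 2 * W"
    using norm_triangle_ineq4[of w1 w2] assms unfolding \<delta>_def by auto
  have near_w1: "norm (w1 - w) \<le> \<delta>" if "w \<in> {w1, w2}" for w
    using that \<open>0 \<le> \<delta>\<close> unfolding \<delta>_def by auto
  have envelope: "Lo v \<le> P a (v - w) \<and> P a (v - w) \<le> Up v"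
    if "(a, w) \<in> {(a1, w1), (a2, w2)}" for a w v
    using that assms near_w1[of w] P_nonneg inner_le_P[of "min a1 a2" \<delta> a w1 w v]
      P_le_outer[of a "max a1 a2" w1 w \<delta> v]
    unfolding Lo_def Up_def by auto
  have support: "norm v \<le> 3 * W + Am" if "Up v \<noteq> 0" for v
  proof -
    have "norm (v - w1) \<le> max a1 a2 + \<delta>"
      using that P_outside[of "max a1 a2 + \<delta>" "v - w1"] assms \<open>0 \<le> \<delta>\<close>
      unfolding Up_def by force
    then show ?thesis
      using norm_triangle_ineq2[of v w1] assms \<open>\<delta> \<le> 2 * W\<close> by auto
  qed
  have [measurable]: "Up \<in> borel_measurable borel" "Lo \<in> borel_measurable borel"
    unfolding Up_def[abs_def] Lo_def[abs_def] by measurable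
  have "0 \<le> Lo v" for v
    unfolding Lo_def by (simp add: P_nonneg)
  have int_Up: "(\<integral>\<^sup>+ v. Up v \<partial>lborel) = ennreal (mass * (max a1 a2 + \<delta>) powr q)"
    unfolding Up_def using assms \<open>0 \<le> \<delta>\<close> by (intro nn_integral_P) auto
  have int_Lo: "(\<integral>\<^sup>+ v. Lo v \<partial>lborel) = ennreal (mass * max 0 (min a1 a2 - \<delta>) powr q)"
    unfolding Lo_def by (cases "0 < min a1 a2 - \<delta>") (auto simp: nn_integral_P)
  have "(\<integral>\<^sup>+ v. ennreal ((1 + (norm v)\<^sup>2) * \<bar>P a1 (v - w1) - P a2 (v - w2)\<bar>) \<partial>lborel)
      \<le> ennreal ((1 + (3 * W + Am)\<^sup>2) *
           (mass * (max a1 a2 + \<delta>) powr q - mass * max 0 (min a1 a2 - \<delta>) powr q))"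
    using envelope support int_Up int_Lo mass_nonneg \<open>\<And>v. 0 \<le> Lo v\<close>
    by (intro nn_integral_weighted_diff_le_envelope) auto
  also have "\<dots> \<le> ennreal ((1 + (3 * W + Am)\<^sup>2) * mass *
         (\<bar>a1 powr q - a2 powr q\<bar> + 2 * (q * (Am + 2 * W) powr (q - 1)) * \<delta>))"
  proof (intro ennreal_leI)
    have "(max a1 a2 + \<delta>) powr q - max 0 (min a1 a2 - \<delta>) powr q
        \<le> \<bar>a1 powr q - a2 powr q\<bar> + 2 * (q * (Am + 2 * W) powr (q - 1)) * \<delta>"
      using assms exponent_ge_1 \<open>0 \<le> \<delta>\<close> \<open>\<delta> \<le> 2 * W\<close> by (intro powr_envelope_gap_le) auto
    then show "(1 + (3 * W + Am)\<^sup>2) * (mass * (max a1 a2 + \<delta>) powr q - mass * max 0 (min a1 a2 - \<delta>) powr q)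
        \<le> (1 + (3 * W + Am)\<^sup>2) * mass *
           (\<bar>a1 powr q - a2 powr q\<bar> + 2 * (q * (Am + 2 * W) powr (q - 1)) * \<delta>)"
      using mass_nonneg by (simp add: right_diff_distrib[symmetric] mult.assoc mult_left_mono)
  qed
  finally show ?thesis
    unfolding \<delta>_def .
qed

lemma weighted_L1_Lipschitz_on_radius:
  assumes "0 < \<kappa>"
  shows "\<exists>K>0. weighted_L1_Lipschitz_on (\<lambda>r w v. P ((\<kappa> * r) powr (1 / q)) (v - w)) C1 C2 K"
proof -
  define rad where "rad r = (\<kappa> * r) powr (1 / q)" for r
  define Am where "Am = rad C1"
  define R where "R = (1 + (3 * C2 + Am)\<^sup>2) * mass"
  define L where "L = q * (Am + 2 * C2) powr (q - 1)"
  define K where "K = R * (\<kappa> + 2 * L) + 1"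
  have "0 \<le> R" "0 \<le> L"
    unfolding R_def L_def using mass_nonneg exponent_ge_1 by auto
  then have "0 < K"
    unfolding K_def using assms by (simp add: add_nonneg_pos)
  have rad_powr: "rad r powr q = \<kappa> * r" if "0 \<le> r" for r
    using that assms exponent_ge_1 unfolding rad_def by (simp add: powr_powr)
  have rad_le: "rad r \<le> Am" if "0 \<le> r" "r \<le> C1" for r
    unfolding Am_def rad_def using that assms exponent_ge_1 by (intro powr_mono2) auto
  have "weighted_L1_Lipschitz_on (\<lambda>r w v. P (rad r) (v - w)) C1 C2 K"
    unfolding weighted_L1_Lipschitz_on_def
  proof (intro allI impI)
    fix r1 r2 :: real and w1 w2 :: 'a
    assume r: "0 \<le> r1" "r1 \<le> C1" "0 \<le> r2" "r2 \<le> C1" and w: "norm w1 \<le> C2" "norm w2 \<le> C2"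
    have "\<bar>rad r1 powr q - rad r2 powr q\<bar> = \<kappa> * \<bar>r1 - r2\<bar>"
      using r assms by (simp add: rad_powr right_diff_distrib[symmetric] abs_mult)
    then have "R * (\<bar>rad r1 powr q - rad r2 powr q\<bar> + 2 * L * norm (w1 - w2))
        \<le> R * ((\<kappa> + 2 * L) * (\<bar>r1 - r2\<bar> + norm (w1 - w2)))"
      using assms \<open>0 \<le> R\<close> \<open>0 \<le> L\<close> by (intro mult_left_mono) (auto simp: algebra_simps)
    also have "\<dots> \<le> K * (\<bar>r1 - r2\<bar> + norm (w1 - w2))"
      unfolding K_def by (simp add: algebra_simps)
    finally have bound: "R * (\<bar>rad r1 powr q - rad r2 powr q\<bar> + 2 * L * norm (w1 - w2))
        \<le> K * (\<bar>r1 - r2\<bar> + norm (w1 - w2))" .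
    have "(\<integral>\<^sup>+ v. ennreal ((1 + (norm v)\<^sup>2) * \<bar>P (rad r1) (v - w1) - P (rad r2) (v - w2)\<bar>) \<partial>lborel)
        \<le> ennreal (R * (\<bar>rad r1 powr q - rad r2 powr q\<bar> + 2 * L * norm (w1 - w2)))"
      unfolding R_def L_def using r w rad_le by (intro nn_integral_weighted_diff_P_le) (auto simp: rad_def)
    also have "\<dots> \<le> ennreal (K * (\<bar>r1 - r2\<bar> + norm (w1 - w2)))"
      using bound by (rule ennreal_leI)
    finally show "(\<integral>\<^sup>+ v. ennreal ((1 + (norm v)\<^sup>2) * \<bar>P (rad r1) (v - w1) - P (rad r2) (v - w2)\<bar>) \<partial>lborel)
        \<le> ennreal (K * (\<bar>r1 - r2\<bar> + norm (w1 - w2)))" .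
  qed
  with \<open>0 < K\<close> show ?thesis
    unfolding rad_def by blast
qed

end

lemma dilation_profile_indicator_cball:
  "dilation_profile (\<lambda>a u. indicator (cball (0::'a::euclidean_space) a) u) DIM('a)"
proof
  show "indicator (cball 0 a) (u + e) \<le> (indicator (cball 0 (a + \<delta>)) u :: real)"
    if "norm e \<le> \<delta>" for a \<delta> and u e :: 'a
    using that norm_triangle_ineq4[of "u + e" e] by (auto simp: indicator_def)
  show "indicator (cball 0 (a - \<delta>)) u \<le> (indicator (cball 0 a) (u + e) :: real)"
    if "norm e \<le> \<delta>" for a \<delta> and u e :: 'a
    using that norm_triangle_ineq[of u e] by (auto simp: indicator_def)
  show "indicator (cball 0 a) (a *\<^sub>R u) = a powr (real DIM('a) - real DIM('a)) * (indicator (cball 0 1) u :: real)"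
    if "0 < a" for a and u :: 'a
    using that by (simp add: indicator_def)
qed (auto simp: indicator_def)

definition barenblatt :: "real \<Rightarrow> real \<Rightarrow> 'a::real_normed_vector \<Rightarrow> real" where
  "barenblatt p a u = max 0 (a\<^sup>2 - (norm u)\<^sup>2) powr p"

lemma dilation_profile_barenblatt:
  assumes "0 < p"
  shows "dilation_profile (barenblatt p :: real \<Rightarrow> 'a::euclidean_space \<Rightarrow> real) (2 * p + DIM('a))"
proof
  show "barenblatt p a \<in> borel_measurable borel" for a
    unfolding barenblatt_def[abs_def] by measurable
  show "barenblatt p 1 u \<le> 1" for u :: 'a
    using assms powr_mono2[of p "max 0 (1 - (norm u)\<^sup>2)" 1] by (simp add: barenblatt_def)
  show "barenblatt p a u = 0" if "0 \<le> a" "a < norm u" for a and u :: 'a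
    using that power_strict_mono[of a "norm u" 2] by (simp add: barenblatt_def)
  show "barenblatt p a (a *\<^sub>R u) = a powr (2 * p + DIM('a) - DIM('a)) * barenblatt p 1 u"
    if "0 < a" for a and u :: 'a
  proof -
    have "max 0 (a\<^sup>2 - (norm (a *\<^sub>R u))\<^sup>2) = a\<^sup>2 * max 0 (1 - (norm u)\<^sup>2)"
      using that by (simp add: power_mult_distrib max_mult_distrib_left algebra_simps)
    moreover have "(a\<^sup>2) powr p = a powr (2 * p)"
      using that by (simp add: powr_powr[symmetric] powr_realpow)
    ultimately show ?thesis
      by (simp add: barenblatt_def powr_mult)
  qed
  show "barenblatt p a (u + e) \<le> barenblatt p (a + \<delta>) u"
    if "0 \<le> a" "norm e \<le> \<delta>" for a \<delta> and u e :: 'a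
  proof -
    have "0 \<le> \<delta>"
      using norm_ge_zero[of e] \<open>norm e \<le> \<delta>\<close> by linarith
    have "max 0 (a\<^sup>2 - (norm (u + e))\<^sup>2) \<le> max 0 ((a + \<delta>)\<^sup>2 - (norm u)\<^sup>2)"
    proof (cases "norm (u + e) \<le> a")
      case True
      have "norm u \<le> norm (u + e) + \<delta>"
        using norm_triangle_ineq4[of "u + e" e] \<open>norm e \<le> \<delta>\<close> by simp
      then have "(norm u)\<^sup>2 \<le> (norm (u + e) + \<delta>)\<^sup>2"
        using \<open>0 \<le> \<delta>\<close> by (intro power_mono) auto
      moreover have "norm (u + e) * \<delta> \<le> a * \<delta>"
        using True \<open>0 \<le> \<delta>\<close> by (intro mult_right_mono) auto
      ultimately show ?thesis
        by (simp add: power2_sum)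
    next
      case False
      then have "a\<^sup>2 \<le> (norm (u + e))\<^sup>2"
        using \<open>0 \<le> a\<close> by (intro power_mono) auto
      then show ?thesis by simp
    qed
    then show ?thesis
      unfolding barenblatt_def using assms by (intro powr_mono2) auto
  qed
  show "barenblatt p (a - \<delta>) u \<le> barenblatt p a (u + e)"
    if "0 < a - \<delta>" "norm e \<le> \<delta>" for a \<delta> and u e :: 'a
  proof -
    have "0 \<le> \<delta>"
      using norm_ge_zero[of e] \<open>norm e \<le> \<delta>\<close> by linarith
    have "max 0 ((a - \<delta>)\<^sup>2 - (norm u)\<^sup>2) \<le> max 0 (a\<^sup>2 - (norm (u + e))\<^sup>2)"
    proof (cases "norm u \<le> a - \<delta>")
      case True
      have "norm (u + e) \<le> norm u + \<delta>"
        using norm_triangle_ineq[of u e] \<open>norm e \<le> \<delta>\<close> by simp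
      then have "(norm (u + e))\<^sup>2 \<le> (norm u + \<delta>)\<^sup>2"
        by (intro power_mono) auto
      moreover have "\<delta> * (norm u + \<delta> - a) \<le> 0"
        using True \<open>0 \<le> \<delta>\<close> by (intro mult_nonneg_nonpos) auto
      ultimately show ?thesis
        by (simp add: power2_eq_square algebra_simps)
    next
      case False
      then have "(a - \<delta>)\<^sup>2 \<le> (norm u)\<^sup>2"
        using \<open>0 < a - \<delta>\<close> by (intro power_mono) auto
      then show ?thesis by simp
    qed
    then show ?thesis
      unfolding barenblatt_def using assms by (intro powr_mono2) auto
  qed
  show "1 \<le> 2 * p + real DIM('a)"
    using assms DIM_positive[where 'a='a] by linarith
qed (simp add: barenblatt_def)

lemma Mloc_eq_indicator_cball:
  fixes w v :: "real^'n"
  assumes "\<gamma> = (real CARD('n) + 2) / real CARD('n)" and "0 \<le> r"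
  shows "Mloc \<gamma> r w v = indicator (cball 0 ((c_d CARD('n) * r) powr (1 / CARD('n)))) (v - w)"
proof -
  define y where "y = c_d CARD('n) * r"
  have "0 \<le> y"
    unfolding y_def c_d_def sphere_area_def using assms by simp
  have "norm (v - w) ^ CARD('n) \<le> y \<longleftrightarrow> root CARD('n) (norm (v - w) ^ CARD('n)) \<le> root CARD('n) y"
    by simp
  also have "root CARD('n) (norm (v - w) ^ CARD('n)) = norm (v - w)"
    by (rule real_root_power_cancel) simp_all
  also have "root CARD('n) y = y powr (1 / CARD('n))"
    using \<open>0 \<le> y\<close> by (rule root_powr_inverse[rotated]) simp
  finally show ?thesis
    using assms by (simp add: Mloc_def Let_def indicator_def norm_minus_commute y_def)
qed

lemma Mloc_eq_barenblatt:
  fixes w v :: "real^'n"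
  assumes "\<gamma> \<noteq> (real CARD('n) + 2) / real CARD('n)" and "1 < \<gamma>" and "0 \<le> r"
  shows "Mloc \<gamma> r w v = c_const CARD('n) \<gamma> *
    barenblatt (n_exp CARD('n) \<gamma> / 2)
      (((2 * \<gamma> / (\<gamma> - 1)) powr (1 / (\<gamma> - 1)) * r) powr ((\<gamma> - 1) / 2)) (v - w)"
proof -
  define A where "A = 2 * \<gamma> / (\<gamma> - 1)"
  have "0 < A"
    unfolding A_def using assms by simp
  have "((A powr (1 / (\<gamma> - 1)) * r) powr ((\<gamma> - 1) / 2))\<^sup>2 = A * r powr (\<gamma> - 1)"
    using assms \<open>0 < A\<close>
    by (simp add: powr_mult powr_powr power_mult_distrib powr_half_sqrt powr_half_sqrt_powr)
  then show ?thesis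
    using assms unfolding A_def by (simp add: Mloc_def Let_def barenblatt_def norm_minus_commute)
qed

lemma admissible_gamma_subcritical:
  assumes "admissible_gamma d \<gamma>" and "\<gamma> \<noteq> (real d + 2) / real d"
  shows "1 < \<gamma>" and "0 < n_exp d \<gamma>"
proof -
  show "1 < \<gamma>"
    using assms unfolding admissible_gamma_def by auto
  have "1 \<le> d"
    using assms unfolding admissible_gamma_def by auto
  have "\<gamma> < (real d + 2) / real d"
  proof (cases "d = 1")
    case False
    with assms have "2 \<le> d" "\<gamma> \<le> (real d + 4) / (real d + 2)"
      unfolding admissible_gamma_def by auto
    moreover have "(real d + 4) / (real d + 2) < (real d + 2) / real d"
      using \<open>2 \<le> d\<close> by (simp add: field_simps)
    ultimately show ?thesis by linarith
  qed (use assms in \<open>auto simp: admissible_gamma_def\<close>)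
  then have "\<gamma> - 1 < 2 / real d"
    using \<open>1 \<le> d\<close> by (simp add: field_simps)
  then have "real d < 2 / (\<gamma> - 1)"
    using \<open>1 < \<gamma>\<close> \<open>1 \<le> d\<close> by (simp add: field_simps)
  then show "0 < n_exp d \<gamma>"
    unfolding n_exp_def by simp
qed

lemma Mloc_weighted_L1_Lipschitz_on_critical:
  assumes "\<gamma> = (real CARD('n) + 2) / real CARD('n)"
  shows "\<exists>K>0. weighted_L1_Lipschitz_on (Mloc \<gamma> :: real \<Rightarrow> real^'n \<Rightarrow> real^'n \<Rightarrow> real) C1 C2 K"
proof -
  interpret dilation_profile "\<lambda>a u. indicator (cball (0::real^'n) a) u" "CARD('n)"
    using dilation_profile_indicator_cball[where 'a="real^'n"] by simp
  have "0 < c_d CARD('n)"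
    by (simp add: c_d_def sphere_area_def)
  then obtain K where "0 < K" and "weighted_L1_Lipschitz_on
      (\<lambda>r w v. indicator (cball (0::real^'n) ((c_d CARD('n) * r) powr (1 / CARD('n)))) (v - w)) C1 C2 K"
    using weighted_L1_Lipschitz_on_radius[of "c_d CARD('n)" C1 C2] by auto
  moreover have "weighted_L1_Lipschitz_on (Mloc \<gamma> :: real \<Rightarrow> real^'n \<Rightarrow> _) C1 C2 K \<longleftrightarrow> weighted_L1_Lipschitz_on
      (\<lambda>r w v. indicator (cball (0::real^'n) ((c_d CARD('n) * r) powr (1 / CARD('n)))) (v - w)) C1 C2 K"
    by (rule weighted_L1_Lipschitz_on_cong) (simp add: Mloc_eq_indicator_cball[OF assms])
  ultimately show ?thesis
    by auto
qed

lemma Mloc_weighted_L1_Lipschitz_on_subcritical: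
  assumes "\<gamma> \<noteq> (real CARD('n) + 2) / real CARD('n)" and "1 < \<gamma>" and "0 < n_exp CARD('n) \<gamma>"
  shows "\<exists>K>0. weighted_L1_Lipschitz_on (Mloc \<gamma> :: real \<Rightarrow> real^'n \<Rightarrow> real^'n \<Rightarrow> real) C1 C2 K"
proof -
  define p where "p = n_exp CARD('n) \<gamma> / 2"
  define \<kappa> where "\<kappa> = (2 * \<gamma> / (\<gamma> - 1)) powr (1 / (\<gamma> - 1))"
  have "0 < p"
    using assms unfolding p_def by simp
  interpret dilation_profile "barenblatt p :: real \<Rightarrow> real^'n \<Rightarrow> real" "2 * p + CARD('n)"
    using dilation_profile_barenblatt[OF \<open>0 < p\<close>, where 'a="real^'n"] by simp
  have exponent: "1 / (2 * p + CARD('n)) = (\<gamma> - 1) / 2"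
    using assms unfolding p_def n_exp_def by (simp add: field_simps)
  have "0 < \<kappa>"
    unfolding \<kappa>_def using assms by simp
  then obtain K where "0 < K"
    and "weighted_L1_Lipschitz_on
      (\<lambda>r w v. barenblatt p ((\<kappa> * r) powr ((\<gamma> - 1) / 2)) (v - w :: real^'n)) C1 C2 K"
    using weighted_L1_Lipschitz_on_radius[of \<kappa> C1 C2] unfolding exponent by auto
  then have "weighted_L1_Lipschitz_on
      (\<lambda>r w v. c_const CARD('n) \<gamma> * barenblatt p ((\<kappa> * r) powr ((\<gamma> - 1) / 2)) (v - w :: real^'n))
      C1 C2 (\<bar>c_const CARD('n) \<gamma>\<bar> * K + 1)"
    by (intro weighted_L1_Lipschitz_on_mono[OF weighted_L1_Lipschitz_on_cmult]) auto
  moreover have "0 < \<bar>c_const CARD('n) \<gamma>\<bar> * K + 1"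
    using \<open>0 < K\<close> by (simp add: add_nonneg_pos)
  moreover have "weighted_L1_Lipschitz_on (Mloc \<gamma> :: real \<Rightarrow> real^'n \<Rightarrow> _) C1 C2 K' \<longleftrightarrow> weighted_L1_Lipschitz_on
      (\<lambda>r w v. c_const CARD('n) \<gamma> * barenblatt p ((\<kappa> * r) powr ((\<gamma> - 1) / 2)) (v - w :: real^'n))
      C1 C2 K'" for K'
    by (rule weighted_L1_Lipschitz_on_cong)
       (simp add: Mloc_eq_barenblatt[OF assms(1,2)] p_def \<kappa>_def)
  ultimately show ?thesis
    by blast
qed

lemma Mloc_weighted_L1_Lipschitz_on:
  assumes "admissible_gamma CARD('n) \<gamma>"
  shows "\<exists>K>0. weighted_L1_Lipschitz_on (Mloc \<gamma> :: real \<Rightarrow> real^'n \<Rightarrow> real^'n \<Rightarrow> real) C1 C2 K"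
proof (cases "\<gamma> = (real CARD('n) + 2) / real CARD('n)")
  case True
  then show ?thesis
    by (rule Mloc_weighted_L1_Lipschitz_on_critical)
next
  case False
  with admissible_gamma_subcritical[OF assms False] show ?thesis
    by (intro Mloc_weighted_L1_Lipschitz_on_subcritical)
qed

lemma rho_nonneg: "(\<And>v. 0 \<le> h x v) \<Longrightarrow> 0 \<le> rho h x"
  unfolding rho_def by (simp add: integral_nonneg_AE)

lemma
  fixes h :: "real^'n \<Rightarrow> real^'n \<Rightarrow> real"
  assumes "(\<lambda>(x, v). h x v) \<in> borel_measurable borel"
  shows borel_measurable_rho: "rho h \<in> borel_measurable borel"
    and borel_measurable_vel: "vel h \<in> borel_measurable borel"
proof -
  have h: "(\<lambda>(x, v). h x v) \<in> borel_measurable (lborel \<Otimes>\<^sub>M lborel)"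
    using assms by (simp add: lborel_prod)
  then have "(\<lambda>(x, v). h x v *\<^sub>R v) \<in> borel_measurable (lborel \<Otimes>\<^sub>M lborel)"
    by measurable
  from lborel.borel_measurable_lebesgue_integral[OF h] lborel.borel_measurable_lebesgue_integral[OF this]
  have "rho h \<in> borel_measurable borel" "mom h \<in> borel_measurable borel"
    unfolding rho_def[abs_def] mom_def[abs_def] by simp_all
  then show "rho h \<in> borel_measurable borel" "vel h \<in> borel_measurable borel"
    unfolding vel_def[abs_def] by measurable
qed

lemma borel_measurable_dom_measure:
  "g \<in> borel_measurable borel \<Longrightarrow> g \<in> borel_measurable (dom_measure torus)"
  unfolding dom_measure_def by (auto intro: measurable_restrict_space1)

lemma nn_integral_Meq_diff_le:
  fixes f g :: "real^'n \<Rightarrow> real^'n \<Rightarrow> real"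
  assumes Lip: "weighted_L1_Lipschitz_on (Mloc \<gamma> :: real \<Rightarrow> real^'n \<Rightarrow> _) C1 C2 K" and "0 \<le> K"
    and nonneg: "\<And>x v. 0 \<le> f x v" "\<And>x v. 0 \<le> g x v"
    and meas: "(\<lambda>(x, v). f x v) \<in> borel_measurable borel" "(\<lambda>(x, v). g x v) \<in> borel_measurable borel"
    and bounds: "\<And>x. rho f x \<le> C1" "\<And>x. rho g x \<le> C1"
      "\<And>x. norm (vel f x) \<le> C2" "\<And>x. norm (vel g x) \<le> C2"
  shows "(\<integral>\<^sup>+ x. (\<integral>\<^sup>+ v. ennreal ((1 + (norm v)\<^sup>2) * \<bar>Meq \<gamma> f x v - Meq \<gamma> g x v\<bar>) \<partial>lborel)
      \<partial>dom_measure torus)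
    \<le> ennreal K * (\<integral>\<^sup>+ x. ennreal (\<bar>rho f x - rho g x\<bar> + norm (vel f x - vel g x))
      \<partial>dom_measure torus)"
proof -
  have "(\<integral>\<^sup>+ x. (\<integral>\<^sup>+ v. ennreal ((1 + (norm v)\<^sup>2) * \<bar>Meq \<gamma> f x v - Meq \<gamma> g x v\<bar>) \<partial>lborel)
        \<partial>dom_measure torus)
      \<le> (\<integral>\<^sup>+ x. ennreal K * ennreal (\<bar>rho f x - rho g x\<bar> + norm (vel f x - vel g x))
        \<partial>dom_measure torus)"
  proof (rule nn_integral_mono)
    fix x
    have "(\<integral>\<^sup>+ v. ennreal ((1 + (norm v)\<^sup>2) * \<bar>Meq \<gamma> f x v - Meq \<gamma> g x v\<bar>) \<partial>lborel)
        \<le> ennreal (K * (\<bar>rho f x - rho g x\<bar> + norm (vel f x - vel g x)))"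
      unfolding Meq_def using rho_nonneg[of f x] rho_nonneg[of g x] nonneg bounds
      by (intro weighted_L1_Lipschitz_onD[OF Lip]) auto
    then show "(\<integral>\<^sup>+ v. ennreal ((1 + (norm v)\<^sup>2) * \<bar>Meq \<gamma> f x v - Meq \<gamma> g x v\<bar>) \<partial>lborel)
        \<le> ennreal K * ennreal (\<bar>rho f x - rho g x\<bar> + norm (vel f x - vel g x))"
      using \<open>0 \<le> K\<close> by (simp add: ennreal_mult)
  qed
  also have "\<dots> = ennreal K * (\<integral>\<^sup>+ x. ennreal (\<bar>rho f x - rho g x\<bar> + norm (vel f x - vel g x))
      \<partial>dom_measure torus)"
  proof -
    note [measurable] = borel_measurable_rho[OF meas(1)] borel_measurable_vel[OF meas(1)]
      borel_measurable_rho[OF meas(2)] borel_measurable_vel[OF meas(2)]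
    show ?thesis
      by (intro nn_integral_cmult borel_measurable_dom_measure) measurable
  qed
  finally show ?thesis .
qed

theorem lemma2p1:
  fixes \<gamma> C0 C1 C2 :: real
  assumes "admissible_gamma CARD('n) \<gamma>"
    and "C0 > 0" and "C1 > 0" and "C2 > 0"
  shows "\<exists>C>0. \<forall>(torus::bool) (f :: real^'n \<Rightarrow> real^'n \<Rightarrow> real) g.
     ((\<forall>h\<in>{f, g}.
        (\<forall>x v. h x v \<ge> 0) \<and>
        (\<lambda>(x, v). h x v) \<in> borel_measurable borel \<and>
        (\<forall>x. integrable lborel (h x)) \<and>
        (\<forall>x. integrable lborel (\<lambda>v. norm v * h x v)) \<and>
        (torus \<longrightarrow> periodic_in_x h) \<and>
        (\<forall>x. rho h x \<le> C1 \<and> norm (vel h x) \<le> C2 \<and>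
             (\<gamma> \<noteq> (real CARD('n) + 2) / real CARD('n) \<longrightarrow> C0 \<le> rho h x))))
     \<longrightarrow>
     (\<integral>\<^sup>+ x. (\<integral>\<^sup>+ v. ennreal ((1 + (norm v)\<^sup>2) * \<bar>Meq \<gamma> f x v - Meq \<gamma> g x v\<bar>) \<partial>lborel)
        \<partial>dom_measure torus)
     \<le> ennreal C * (\<integral>\<^sup>+ x. ennreal (\<bar>rho f x - rho g x\<bar> + norm (vel f x - vel g x))
        \<partial>dom_measure torus)"
proof -
  obtain K where "0 < K" and Lip: "weighted_L1_Lipschitz_on (Mloc \<gamma> :: real \<Rightarrow> real^'n \<Rightarrow> _) C1 C2 K"
    using Mloc_weighted_L1_Lipschitz_on[OF assms(1), of C1 C2] by (elim exE conjE)
  then show ?thesis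
    by (intro exI[of _ K] conjI allI impI nn_integral_Meq_diff_le[OF Lip]) simp_all
qed

end
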